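(* Let $-1<q<1$, $q\ne0$. For $s\in\frac12\mathbb Z_+$ let $\varphi_s:{\rm Pol}(SU_q(2))\to M_{2s+1}$ be the homomorphism associated to the $AN_q$-matrix $A_s$, and let $v_s^{(t)}=(\mathrm{id}\otimes\varphi_s)(u^{(t)})\in M_{2t+1}\otimes M_{2s+1}$. Then there is a constant $C_q$ depending only on $q$ such that $$|q|^{-2st}\le\|v_s^{(t)}\|_\infty\le C_q^s|q|^{-2st}\quad\text{for all }s,t\in\tfrac12\mathbb Z_+.$$
   Context: ${\rm Pol}(SU_q(2))$ is the $*$-algebra generated by $a_q,c_q$ subject to $a_q^*a_q+c_q^*c_q=1=a_qa_q^*+q^2c_q^*c_q$, $c_q^*c_q=c_qc_q^*$, $a_qc_q=qc_qa_q$, $a_qc_q^*=qc_q^*a_q$, with coproduct $\Delta(a_q)=a_q\otimes a_q-qc_q^*\otimes c_q$, $\Delta(c_q)=c_q\otimes a_q+a_q^*\otimes c_q$; $u^{(t)}\in M_{2t+1}({\rm Pol}(SU_q(2)))$, $t\in\frac12\mathbb Z_+$, are its irreducible unitary representations, $u^{(1/2)}=\begin{bmatrix}a_q&-qc_q^*\\c_q&a_q^*\end{bmatrix}$. $A_s=\begin{bmatrix}x_s&y_s\\0&x_s^{-1}\end{bmatrix}$ acts on $\ell^2_{2s+1}$ with basis $e_{-s},\dots,e_s$ by $x_se_k=q^ke_k$, $y_se_k=\sqrt{|q|^{-2s}-|q|^{-2k}-|q|^{2k+2}+|q|^{2s+2}}\,e_{k+1}$, $e_{s+1}=0$ (for $q<0$,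 $q^k:=|q|^ke^{i\pi k}$). $\varphi_s$ is the unique unital homomorphism with $\varphi_s(a_q)=x_s$, $\varphi_s(-qc_q^* )=y_s$, $\varphi_s(c_q)=0$, $\varphi_s(a_q^* )=x_s^{-1}$. $\|\cdot\|_\infty$ is the operator norm. *)

theory Defs
  imports "Jordan_Normal_Form.Matrix" Complex_Main
begin

definition cadj :: "complex mat \<Rightarrow> complex mat" where
  "cadj M = mat (dim_col M) (dim_row M) (\<lambda>(i,j). cnj (M $$ (j,i)))"

definition vnorm :: "complex vec \<Rightarrow> real" where
  "vnorm x = sqrt (\<Sum>i<dim_vec x. (cmod (x $ i))\<^sup>2)"

definition opnorm :: "complex mat \<Rightarrow> real" where
  "opnorm M = Sup {vnorm (M *\<^sub>v x) | x. x \<in> carrier_vec (dim_col M) \<and> vnorm x \<le> 1}"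

definition qpow :: "real \<Rightarrow> real \<Rightarrow> complex" where
  "qpow q k = complex_of_real (\<bar>q\<bar> powr k) * (if q < 0 then cis (pi * k) else 1)"

(* s = m/2. Basis e_{-s},...,e_s of l^2_{2s+1} is indexed by j = 0..m, e_{j - s}. *)
definition xs :: "real \<Rightarrow> nat \<Rightarrow> complex mat" where
  "xs q m = mat (m+1) (m+1) (\<lambda>(i,j). if i = j then qpow q (real j - real m / 2) else 0)"

definition xs_inv :: "real \<Rightarrow> nat \<Rightarrow> complex mat" where
  "xs_inv q m = mat (m+1) (m+1) (\<lambda>(i,j). if i = j then 1 / qpow q (real j - real m / 2) else 0)"

definition ys :: "real \<Rightarrow> nat \<Rightarrow> complex mat" where
  "ys q m = mat (m+1) (m+1) (\<lambda>(i,j). if i = j + 1 then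
      (let s = real m / 2; k = real j - real m / 2 in
        complex_of_real (sqrt (\<bar>q\<bar> powr (-2*s) - \<bar>q\<bar> powr (-2*k)
                              - \<bar>q\<bar> powr (2*k+2) + \<bar>q\<bar> powr (2*s+2))))
      else 0)"

(* The entries of A_s = [x_s, y_s; 0, x_s^{-1}] = (id (x) phi_s)(u^{(1/2)});
   index 0 corresponds to the first row/column. *)
definition As :: "real \<Rightarrow> nat \<Rightarrow> nat \<Rightarrow> nat \<Rightarrow> complex mat" where
  "As q m i j = (if i = 0 \<and> j = 0 then xs q m
                 else if i = 0 then ys q m
                 else if j = 0 then 0\<^sub>m (m+1) (m+1)
                 else xs_inv q m)"

(* Blocks of (id (x) phi_s)(u^{(1/2)} (tensor) ... (tensor) u^{(1/2)}) (n factors):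
   block (I,J), I,J < 2^n, with the k-th tensor factor encoded by bit k of the index,
   equals A_{i_0 j_0} * A_{i_1 j_1} * ... * A_{i_{n-1} j_{n-1}}. *)
fun tblk :: "real \<Rightarrow> nat \<Rightarrow> nat \<Rightarrow> nat \<Rightarrow> nat \<Rightarrow> complex mat" where
  "tblk q m 0 I J = 1\<^sub>m (m+1)"
| "tblk q m (Suc n) I J = As q m (I mod 2) (J mod 2) * tblk q m n (I div 2) (J div 2)"

(* The matrix (id (x) phi_s)(u^{(1/2)} tensor-power n) in M_{2^n} (x) M_{m+1},
   row index I*(m+1)+a. *)
definition Vten :: "real \<Rightarrow> nat \<Rightarrow> nat \<Rightarrow> complex mat" where
  "Vten q m n = mat (2^n*(m+1)) (2^n*(m+1))
      (\<lambda>(r,c). tblk q m n (r div (m+1)) (c div (m+1)) $$ (r mod (m+1), c mod (m+1)))"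

(* Spin n/2 subspace H_n of (C^2)^{(x) n}: vectors orthogonal to all
   eta (x) E (x) zeta, where E = e_1 (x) e_2 - q e_2 (x) e_1 is the invariant vector
   of u^{(1/2)} tensor u^{(1/2)} (placed at tensor positions i, i+1).
   Unfolded: for each index K with bit i = 0 and bit (i+1) = 1,
   <E-part, xi> = xi_K - q xi_{K - 2^i} = 0. *)
definition Hsp :: "real \<Rightarrow> nat \<Rightarrow> complex vec set" where
  "Hsp q n = {\<xi> \<in> carrier_vec (2^n). \<forall>i K. i + 1 < n \<and> K < 2^n
       \<and> (K div 2^i) mod 2 = 0 \<and> (K div 2^(i+1)) mod 2 = 1
       \<longrightarrow> \<xi> $ K - complex_of_real q * \<xi> $ (K - 2^i) = 0}"

definition kron_id :: "complex mat \<Rightarrow> nat \<Rightarrow> complex mat" where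
  "kron_id P k = mat (dim_row P * k) (dim_col P * k)
      (\<lambda>(r,c). if r mod k = c mod k then P $$ (r div k, c div k) else 0)"

(* Isometries P : C^{n+1} -> (C^2)^{(x) n} onto H_n; these are exactly the ways of
   realizing u^{(n/2)} (up to unitary equivalence) as P^* u^{(1/2) (x) n} P. *)
definition spin_iso :: "real \<Rightarrow> nat \<Rightarrow> complex mat \<Rightarrow> bool" where
  "spin_iso q n P \<longleftrightarrow> P \<in> carrier_mat (2^n) (n+1) \<and> cadj P * P = 1\<^sub>m (n+1)
     \<and> {P *\<^sub>v x | x. x \<in> carrier_vec (n+1)} = Hsp q n"

(* v_s^{(t)} = (id (x) phi_s)(u^{(t)}) with s = m/2, t = n/2, u^{(t)} = P^* u^{(1/2)(x)n} P. *)
definition vst :: "real \<Rightarrow> nat \<Rightarrow> nat \<Rightarrow> complex mat \<Rightarrow> complex mat" where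
  "vst q m n P = cadj (kron_id P (m+1)) * Vten q m n * kron_id P (m+1)"

end

theory Submission
  imports Defs "HOL-Analysis.L2_Norm"
begin

(* The bound holds with C = 1; in fact the norm equals |q|^(-2st).
   Upper bound: A_s acts on C^2 (x) C^(2s+1) by mapping the pair of coordinates
   (e_0 (x) e_(k+1), e_1 (x) e_k) through a 2x2 upper triangular block and the two remaining
   coordinates by scalars of modulus |q|^(-s); the entries of y_s are exactly such that each
   block has norm |q|^(-s) as well.  Hence the image of the n-fold tensor power of u^(1/2)
   under phi_s has norm at most |q|^(-sn), and compressing by the isometry P (x) 1 does not
   increase norms.
   Lower bound: e_0 (x) ... (x) e_0 lies in the spin n/2 subspace, and the corresponding
   diagonal entry of the image is x_s^n at e_(-s), i.e. q^(-sn). *)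

lemma sum_lessThan_mult:
  fixes f :: "nat \<Rightarrow> 'a::comm_monoid_add"
  shows "(\<Sum>r<N*k. f r) = (\<Sum>I<N. \<Sum>a<k. f (I*k+a))"
proof -
  have "(\<Sum>a<k. f (I*k+a)) = sum f {I*k..<I*k+k}" for I
    using sum.shift_bounds_nat_ivl[of f 0 "I*k" k] by (simp add: lessThan_atLeast0 add.commute)
  then show ?thesis
    by (simp add: sum.nat_group)
qed

lemma sum_lessThan_2: "(\<Sum>i<2. f i) = f 0 + f (1::nat)"
  by (simp add: numeral_2_eq_2)

lemma index_lt_mult:
  fixes I a N k :: nat
  assumes "I < N" "a < k"
  shows "I*k + a < N*k"
proof -
  have "I*k + a < Suc I * k"
    using assms(2) by simp
  also have "\<dots> \<le> N*k"
    using assms(1) by (intro mult_le_mono1) simp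
  finally show ?thesis .
qed

lemma mult_add_div_mod:
  fixes I a k :: nat
  assumes "a < k"
  shows "(I*k + a) div k = I" "(I*k + a) mod k = a"
  using assms by simp_all

lemma index_mult_mat_sum:
  "A \<in> carrier_mat nr nc \<Longrightarrow> B \<in> carrier_mat nc nd \<Longrightarrow> i < nr \<Longrightarrow> j < nd \<Longrightarrow>
   (A * B) $$ (i,j) = (\<Sum>c<nc. A $$ (i,c) * B $$ (c,j))"
  by (simp add: scalar_prod_def lessThan_atLeast0)

lemma index_mult_mat_vec_sum:
  "M \<in> carrier_mat nr nc \<Longrightarrow> v \<in> carrier_vec nc \<Longrightarrow> i < nr \<Longrightarrow>
   (M *\<^sub>v v) $ i = (\<Sum>c<nc. M $$ (i,c) * v $ c)"
  by (simp add: scalar_prod_def lessThan_atLeast0)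

section \<open>Euclidean norm and operator norm\<close>

lemma vnorm_nonneg: "0 \<le> vnorm x"
  unfolding vnorm_def by (simp add: sum_nonneg)

lemma vnorm_square: "(vnorm x)\<^sup>2 = (\<Sum>i<dim_vec x. (cmod (x $ i))\<^sup>2)"
  unfolding vnorm_def by (simp add: sum_nonneg)

lemma vnorm_unit_vec: "i < N \<Longrightarrow> vnorm (unit_vec N i :: complex vec) = 1"
  by (simp add: vnorm_def unit_vec_def if_distrib[of "\<lambda>z. (cmod z)\<^sup>2"] cong: if_cong)

lemma cscalar_prod_self: "x \<bullet>c x = complex_of_real ((vnorm x)\<^sup>2)"
  unfolding vnorm_square scalar_prod_def of_real_sum
  by (intro sum.cong) (auto simp: lessThan_atLeast0 complex_norm_square[symmetric])

lemma norm_cscalar_prod_le: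
  assumes "dim_vec y = dim_vec x"
  shows "cmod (x \<bullet>c y) \<le> vnorm x * vnorm y"
proof -
  have "cmod (x \<bullet>c y) \<le> (\<Sum>i<dim_vec x. cmod (x $ i) * cmod (y $ i))"
    using assms unfolding scalar_prod_def
    by (rule_tac order_trans[OF norm_sum]) (simp add: norm_mult lessThan_atLeast0)
  also have "\<dots> \<le> L2_set (\<lambda>i. cmod (x $ i)) {..<dim_vec x} * L2_set (\<lambda>i. cmod (y $ i)) {..<dim_vec x}"
    using L2_set_mult_ineq[of "\<lambda>i. cmod (x $ i)" "\<lambda>i. cmod (y $ i)"] by simp
  also have "\<dots> = vnorm x * vnorm y"
    using assms by (simp add: vnorm_def L2_set_def)
  finally show ?thesis .
qed

lemma cscalar_prod_unit_vec: "(v :: complex vec) \<in> carrier_vec N \<Longrightarrow> i < N \<Longrightarrow> v \<bullet>c unit_vec N i = v $ i"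
  by (simp add: scalar_prod_def unit_vec_def if_distrib[of cnj] if_distrib[of "(*) _"] cong: if_cong)

lemma mult_mat_vec_unit_vec:
  "(M :: complex mat) \<in> carrier_mat nr N \<Longrightarrow> i < N \<Longrightarrow> j < nr \<Longrightarrow> (M *\<^sub>v unit_vec N i) $ j = M $$ (j,i)"
  by (simp add: scalar_prod_def unit_vec_def if_distrib[of "(*) _"] cong: if_cong)

lemma cadj_carrier: "M \<in> carrier_mat nr nc \<Longrightarrow> cadj M \<in> carrier_mat nc nr"
  by (simp add: cadj_def)

lemma cadj_cadj: "cadj (cadj M) = M"
  by (rule eq_matI) (simp_all add: cadj_def)

lemma cscalar_prod_mult_mat_vec:
  assumes "M \<in> carrier_mat nr nc" "x \<in> carrier_vec nc" "y \<in> carrier_vec nr"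
  shows "(M *\<^sub>v x) \<bullet>c y = x \<bullet>c (cadj M *\<^sub>v y)"
proof -
  have "(M *\<^sub>v x) \<bullet>c y = (\<Sum>i<nr. \<Sum>j<nc. M $$ (i,j) * x $ j * cnj (y $ i))"
    using assms by (simp add: scalar_prod_def lessThan_atLeast0 sum_distrib_right)
  also have "\<dots> = (\<Sum>j<nc. \<Sum>i<nr. M $$ (i,j) * x $ j * cnj (y $ i))"
    by (rule sum.swap)
  also have "\<dots> = x \<bullet>c (cadj M *\<^sub>v y)"
    using assms by (simp add: cadj_def scalar_prod_def lessThan_atLeast0 sum_distrib_left mult_ac)
  finally show ?thesis .
qed

lemma vnorm_isometry:
  assumes "M \<in> carrier_mat nr nc" "cadj M * M = 1\<^sub>m nc" "x \<in> carrier_vec nc"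
  shows "vnorm (M *\<^sub>v x) = vnorm x"
proof -
  have "cadj M *\<^sub>v (M *\<^sub>v x) = (cadj M * M) *\<^sub>v x"
    using assms cadj_carrier[OF assms(1)] by (metis assoc_mult_mat_vec)
  then have "(M *\<^sub>v x) \<bullet>c (M *\<^sub>v x) = x \<bullet>c x"
    using assms by (simp add: cscalar_prod_mult_mat_vec)
  then have "complex_of_real ((vnorm (M *\<^sub>v x))\<^sup>2) = complex_of_real ((vnorm x)\<^sup>2)"
    by (simp only: cscalar_prod_self)
  then have "(vnorm (M *\<^sub>v x))\<^sup>2 = (vnorm x)\<^sup>2"
    by (simp only: of_real_eq_iff)
  then show ?thesis
    using vnorm_nonneg by (simp add: power2_eq_iff_nonneg)
qed

lemma vnorm_cadj_isometry_le:
  assumes "M \<in> carrier_mat nr nc" "cadj M * M = 1\<^sub>m nc" "y \<in> carrier_vec nr"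
  shows "vnorm (cadj M *\<^sub>v y) \<le> vnorm y"
proof -
  define z where "z = cadj M *\<^sub>v y"
  have z: "z \<in> carrier_vec nc"
    using assms cadj_carrier[OF assms(1)] by (simp add: z_def)
  have "(vnorm z)\<^sup>2 = cmod (z \<bullet>c z)"
    unfolding cscalar_prod_self norm_of_real by simp
  also have "z \<bullet>c z = (M *\<^sub>v z) \<bullet>c y"
    using cscalar_prod_mult_mat_vec[OF assms(1) z assms(3)] by (simp add: z_def)
  also have "cmod \<dots> \<le> vnorm (M *\<^sub>v z) * vnorm y"
    using assms z by (intro norm_cscalar_prod_le) simp
  also have "\<dots> = vnorm z * vnorm y"
    using vnorm_isometry[OF assms(1,2) z] by simp
  finally have "vnorm z * vnorm z \<le> vnorm z * vnorm y"
    by (simp add: power2_eq_square)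
  then show ?thesis
    unfolding z_def[symmetric] using vnorm_nonneg[of z] vnorm_nonneg[of y]
    by (metis mult_le_cancel_left_pos not_le order.strict_iff_order)
qed

lemma opnorm_le:
  assumes "0 \<le> c" "\<And>x. x \<in> carrier_vec (dim_col M) \<Longrightarrow> vnorm (M *\<^sub>v x) \<le> c * vnorm x"
  shows "opnorm M \<le> c"
  unfolding opnorm_def
proof (rule cSup_least)
  have "vnorm (M *\<^sub>v 0\<^sub>v (dim_col M)) \<in> {vnorm (M *\<^sub>v x) |x. x \<in> carrier_vec (dim_col M) \<and> vnorm x \<le> 1}"
    by (intro CollectI exI[of _ "0\<^sub>v (dim_col M)"]) (simp add: vnorm_def)
  then show "{vnorm (M *\<^sub>v x) |x. x \<in> carrier_vec (dim_col M) \<and> vnorm x \<le> 1} \<noteq> {}"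
    by blast
  fix r assume "r \<in> {vnorm (M *\<^sub>v x) |x. x \<in> carrier_vec (dim_col M) \<and> vnorm x \<le> 1}"
  then obtain x where x: "r = vnorm (M *\<^sub>v x)" "x \<in> carrier_vec (dim_col M)" "vnorm x \<le> 1"
    by blast
  have "vnorm (M *\<^sub>v x) \<le> c * vnorm x"
    using x(2) by (rule assms(2))
  also have "\<dots> \<le> c"
    using x(3) assms(1) by (rule mult_left_le)
  finally show "r \<le> c"
    using x(1) by simp
qed

lemma vnorm_le_opnorm:
  assumes "\<And>x. x \<in> carrier_vec (dim_col M) \<Longrightarrow> vnorm (M *\<^sub>v x) \<le> c * vnorm x"
    and "x \<in> carrier_vec (dim_col M)" "vnorm x \<le> 1"
  shows "vnorm (M *\<^sub>v x) \<le> opnorm M"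
  unfolding opnorm_def
proof (rule cSup_upper)
  show "vnorm (M *\<^sub>v x) \<in> {vnorm (M *\<^sub>v x) |x. x \<in> carrier_vec (dim_col M) \<and> vnorm x \<le> 1}"
    using assms(2,3) by blast
  have "r \<le> \<bar>c\<bar>" if r: "r \<in> {vnorm (M *\<^sub>v x) |x. x \<in> carrier_vec (dim_col M) \<and> vnorm x \<le> 1}" for r
  proof -
    obtain y where y: "r = vnorm (M *\<^sub>v y)" "y \<in> carrier_vec (dim_col M)" "vnorm y \<le> 1"
      using r by blast
    have "vnorm (M *\<^sub>v y) \<le> c * vnorm y"
      using y(2) by (rule assms(1))
    also have "\<dots> \<le> \<bar>c\<bar> * vnorm y"
      using vnorm_nonneg by (rule mult_right_mono[OF abs_ge_self])
    also have "\<dots> \<le> \<bar>c\<bar>"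
      using y(3) by (simp add: mult_left_le)
    finally show ?thesis
      using y(1) by simp
  qed
  then show "bdd_above {vnorm (M *\<^sub>v x) |x. x \<in> carrier_vec (dim_col M) \<and> vnorm x \<le> 1}"
    by (rule bdd_aboveI)
qed

lemma compression_mult_vec:
  assumes "K \<in> carrier_mat N n" "V \<in> carrier_mat N N" "x \<in> carrier_vec n"
  shows "(cadj K * V * K) *\<^sub>v x = cadj K *\<^sub>v (V *\<^sub>v (K *\<^sub>v x))"
  using cadj_carrier[OF assms(1)] assms
  by (simp add: assoc_mult_mat_vec[of _ n N _ N] assoc_mult_mat_vec[of _ n N _ n])

lemma vnorm_compression_le:
  assumes K: "K \<in> carrier_mat N n" "cadj K * K = 1\<^sub>m n"
    and V: "V \<in> carrier_mat N N"
    and bound: "\<And>y. y \<in> carrier_vec N \<Longrightarrow> vnorm (V *\<^sub>v y) \<le> c * vnorm y"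
    and x: "x \<in> carrier_vec n"
  shows "vnorm ((cadj K * V * K) *\<^sub>v x) \<le> c * vnorm x"
proof -
  have Kx: "K *\<^sub>v x \<in> carrier_vec N"
    using K x by simp
  have "vnorm ((cadj K * V * K) *\<^sub>v x) = vnorm (cadj K *\<^sub>v (V *\<^sub>v (K *\<^sub>v x)))"
    using K(1) V x by (simp only: compression_mult_vec)
  also have "\<dots> \<le> vnorm (V *\<^sub>v (K *\<^sub>v x))"
    using K V Kx by (intro vnorm_cadj_isometry_le) auto
  also have "\<dots> \<le> c * vnorm (K *\<^sub>v x)"
    using Kx by (rule bound)
  also have "vnorm (K *\<^sub>v x) = vnorm x"
    using K x by (rule vnorm_isometry)
  finally show ?thesis .
qed

section \<open>Tensoring with an identity matrix\<close>

lemma kron_id_carrier: "P \<in> carrier_mat a b \<Longrightarrow> kron_id P k \<in> carrier_mat (a*k) (b*k)"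
  by (simp add: kron_id_def)

lemma index_kron_id:
  "P \<in> carrier_mat a b \<Longrightarrow> r < a*k \<Longrightarrow> c < b*k \<Longrightarrow>
   kron_id P k $$ (r,c) = (if r mod k = c mod k then P $$ (r div k, c div k) else 0)"
  by (simp add: kron_id_def)

lemma kron_id_isometry:
  assumes P: "P \<in> carrier_mat a b" and iso: "cadj P * P = 1\<^sub>m b" and k: "0 < k"
  shows "cadj (kron_id P k) * kron_id P k = 1\<^sub>m (b*k)"
proof (rule eq_matI)
  let ?K = "kron_id P k"
  have K: "?K \<in> carrier_mat (a*k) (b*k)"
    using P by (rule kron_id_carrier)
  then show "dim_row (cadj ?K * ?K) = dim_row (1\<^sub>m (b*k))" "dim_col (cadj ?K * ?K) = dim_col (1\<^sub>m (b*k))"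
    by (auto simp: cadj_def)
  fix i j assume "i < dim_row (1\<^sub>m (b*k))" "j < dim_col (1\<^sub>m (b*k))"
  then have ij: "i < b*k" "j < b*k"
    by auto
  have idk: "i div k < b" "j div k < b"
    using ij k by (auto simp: less_mult_imp_div_less)
  have "(cadj ?K * ?K) $$ (i,j) = (\<Sum>R<a. \<Sum>t<k. cadj ?K $$ (i,R*k+t) * ?K $$ (R*k+t,j))"
    using index_mult_mat_sum[OF cadj_carrier[OF K] K ij] by (simp only: sum_lessThan_mult)
  also have "\<dots> = (\<Sum>R<a. \<Sum>t<k. (if t = i mod k then cnj (P $$ (R, i div k)) else 0) *
                                   (if t = j mod k then P $$ (R, j div k) else 0))"
  proof (intro sum.cong refl)
    fix R t assume "R \<in> {..<a}" "t \<in> {..<k}"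
    then have "R*k+t < a*k" "t < k"
      using index_lt_mult by auto
    then show "cadj ?K $$ (i,R*k+t) * ?K $$ (R*k+t,j) =
       (if t = i mod k then cnj (P $$ (R, i div k)) else 0) * (if t = j mod k then P $$ (R, j div k) else 0)"
      using K ij index_kron_id[OF P] by (auto simp: cadj_def)
  qed
  also have "\<dots> = (if i mod k = j mod k then (\<Sum>R<a. cnj (P $$ (R, i div k)) * P $$ (R, j div k)) else 0)"
    using k by (auto simp: if_distrib[of "\<lambda>z. z * _"] if_distrib[of "\<lambda>z. _ * z"] sum.If_cases
        cong: if_cong)
  also have "\<dots> = (if i mod k = j mod k then (cadj P * P) $$ (i div k, j div k) else 0)"
    using P idk by (subst index_mult_mat_sum[OF cadj_carrier[OF P] P idk]) (auto simp: cadj_def)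
  also have "\<dots> = 1\<^sub>m (b*k) $$ (i,j)"
  proof -
    have "i = j \<longleftrightarrow> i div k = j div k \<and> i mod k = j mod k"
      by (metis div_mult_mod_eq)
    then show ?thesis
      using iso idk ij by auto
  qed
  finally show "(cadj ?K * ?K) $$ (i,j) = 1\<^sub>m (b*k) $$ (i,j)" .
qed

definition kron_vec :: "complex vec \<Rightarrow> complex vec \<Rightarrow> complex vec" where
  "kron_vec v u = vec (dim_vec v * dim_vec u) (\<lambda>r. v $ (r div dim_vec u) * u $ (r mod dim_vec u))"

lemma dim_kron_vec [simp]: "dim_vec (kron_vec v u) = dim_vec v * dim_vec u"
  by (simp add: kron_vec_def)

lemma index_kron_vec:
  "I < dim_vec v \<Longrightarrow> a < dim_vec u \<Longrightarrow> kron_vec v u $ (I * dim_vec u + a) = v $ I * u $ a"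
  using index_lt_mult[of I "dim_vec v" a "dim_vec u"] by (simp add: kron_vec_def mult_add_div_mod)

lemma vnorm_kron_vec: "vnorm (kron_vec v u) = vnorm v * vnorm u"
proof -
  have "(vnorm (kron_vec v u))\<^sup>2 = (\<Sum>I<dim_vec v. \<Sum>a<dim_vec u. (cmod (v $ I))\<^sup>2 * (cmod (u $ a))\<^sup>2)"
    unfolding vnorm_square dim_kron_vec sum_lessThan_mult
    by (intro sum.cong refl) (simp add: index_kron_vec norm_mult power_mult_distrib)
  also have "\<dots> = (vnorm v * vnorm u)\<^sup>2"
    by (simp add: vnorm_square power_mult_distrib sum_product)
  finally show ?thesis
    using vnorm_nonneg by (simp add: power2_eq_iff_nonneg)
qed

lemma kron_id_mult_kron_vec:
  assumes P: "P \<in> carrier_mat a b" and v: "v \<in> carrier_vec b" and u: "u \<in> carrier_vec k"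
  shows "kron_id P k *\<^sub>v kron_vec v u = kron_vec (P *\<^sub>v v) u"
proof (rule eq_vecI)
  show "dim_vec (kron_id P k *\<^sub>v kron_vec v u) = dim_vec (kron_vec (P *\<^sub>v v) u)"
    using P u by (simp add: kron_id_def kron_vec_def)
  fix r assume "r < dim_vec (kron_vec (P *\<^sub>v v) u)"
  then have r: "r < a*k"
    using P u by (simp add: kron_vec_def)
  moreover have "0 < k"
    using r by (cases k) auto
  ultimately have rk: "r div k < a" "r mod k < k"
    by (simp_all add: less_mult_imp_div_less)
  have x: "kron_vec v u \<in> carrier_vec (b*k)"
    using v u by (simp add: kron_vec_def)
  have "kron_vec v u $ (C*k+t) = v $ C * u $ t" if "C < b" "t < k" for C t
    using index_kron_vec[of C v t u] v u that by simp
  then have "(kron_id P k *\<^sub>v kron_vec v u) $ r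
      = (\<Sum>C<b. \<Sum>t<k. kron_id P k $$ (r, C*k+t) * (v $ C * u $ t))"
    unfolding index_mult_mat_vec_sum[OF kron_id_carrier[OF P] x r] sum_lessThan_mult
    by (intro sum.cong refl) simp
  also have "\<dots> = (\<Sum>C<b. \<Sum>t<k. if t = r mod k then P $$ (r div k, C) * v $ C * u $ t else 0)"
    using P r by (intro sum.cong refl) (simp add: index_kron_id index_lt_mult)
  also have "\<dots> = (\<Sum>C<b. P $$ (r div k, C) * v $ C) * u $ (r mod k)"
    using rk by (simp add: sum_distrib_right)
  also have "\<dots> = kron_vec (P *\<^sub>v v) u $ r"
    using index_mult_mat_vec_sum[OF P v rk(1)] P v u r by (simp add: kron_vec_def)
  finally show "(kron_id P k *\<^sub>v kron_vec v u) $ r = kron_vec (P *\<^sub>v v) u $ r" .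
qed

lemma kron_vec_unit_vec_0: "0 < k \<Longrightarrow> kron_vec (unit_vec N 0) (unit_vec k 0) = unit_vec (N*k) 0"
proof (rule eq_vecI)
  fix r assume "0 < k" "r < dim_vec (unit_vec (N*k) 0)"
  moreover have "r div k = 0 \<and> r mod k = 0 \<longleftrightarrow> r = 0"
    by (metis div_mult_mod_eq mult_zero_left add_0 div_0 mod_0)
  ultimately show "kron_vec (unit_vec N 0) (unit_vec k 0) $ r = unit_vec (N*k) 0 $ r"
    by (auto simp: kron_vec_def unit_vec_def less_mult_imp_div_less)
qed simp

section \<open>The norm of A_s\<close>

lemma triangular_2x2_bound_real:
  fixes R x y z P Q :: real
  assumes "0 < R" "0 \<le> x" "x\<^sup>2 \<le> R" "0 \<le> z" "z \<le> R" "0 \<le> y"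
    "y\<^sup>2 = (R - z) * (R - x\<^sup>2) / R" "0 \<le> P" "0 \<le> Q"
  shows "(x*P + y*Q)\<^sup>2 + z*Q\<^sup>2 \<le> R*P\<^sup>2 + R*Q\<^sup>2"
proof -
  \<comment> \<open>The choice of y makes R times the defect a perfect square (A P - B Q)^2.\<close>
  define A where "A = sqrt (R*(R - x\<^sup>2))"
  define B where "B = sqrt ((R - z)*x\<^sup>2)"
  have A2: "A\<^sup>2 = R*(R - x\<^sup>2)" and B2: "B\<^sup>2 = (R - z)*x\<^sup>2"
    using assms by (simp_all add: A_def B_def)
  have "(R*x*y)\<^sup>2 = (A*B)\<^sup>2"
    using assms A2 B2 by (simp add: power_mult_distrib) (simp add: field_simps power2_eq_square)
  moreover have "0 \<le> R*x*y" "0 \<le> A*B"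
    using assms by (auto simp: A_def B_def)
  ultimately have AB: "A*B = R*x*y"
    using power2_eq_iff_nonneg by metis
  have Ry: "R*(R - z) - R*y\<^sup>2 = (R - z)*x\<^sup>2"
    using assms(1,7) by (simp add: field_simps)
  have "R*((R*P\<^sup>2 + R*Q\<^sup>2) - ((x*P + y*Q)\<^sup>2 + z*Q\<^sup>2))
      = R*(R - x\<^sup>2)*P\<^sup>2 - 2*(R*x*y)*P*Q + (R*(R - z) - R*y\<^sup>2)*Q\<^sup>2"
    by (simp add: power2_eq_square algebra_simps)
  also have "\<dots> = A\<^sup>2*P\<^sup>2 - 2*(A*B)*P*Q + B\<^sup>2*Q\<^sup>2"
    by (simp only: A2 B2 AB Ry)
  also have "\<dots> = (A*P - B*Q)\<^sup>2"
    by (simp add: power2_eq_square algebra_simps)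
  finally have "0 \<le> R*((R*P\<^sup>2 + R*Q\<^sup>2) - ((x*P + y*Q)\<^sup>2 + z*Q\<^sup>2))"
    by simp
  then show ?thesis
    using assms(1) by (simp add: zero_le_mult_iff)
qed

lemma triangular_2x2_bound:
  fixes X p q :: complex and R z y :: real
  assumes "0 < R" "(cmod X)\<^sup>2 \<le> R" "0 \<le> z" "z \<le> R" "0 \<le> y"
    "y\<^sup>2 = (R - z) * (R - (cmod X)\<^sup>2) / R"
  shows "(cmod (X*p + y*q))\<^sup>2 + z*(cmod q)\<^sup>2 \<le> R*((cmod p)\<^sup>2 + (cmod q)\<^sup>2)"
proof -
  have "cmod (X*p + y*q) \<le> cmod X * cmod p + y * cmod q"
    using norm_triangle_ineq[of "X*p" "y*q"] assms(5) by (simp add: norm_mult)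
  then have "(cmod (X*p + y*q))\<^sup>2 \<le> (cmod X * cmod p + y * cmod q)\<^sup>2"
    by (simp add: power_mono)
  also have "\<dots> + z*(cmod q)\<^sup>2 \<le> R*(cmod p)\<^sup>2 + R*(cmod q)\<^sup>2"
    using assms by (intro triangular_2x2_bound_real) auto
  finally show ?thesis
    by (simp add: algebra_simps)
qed

lemma cmod_qpow: "cmod (qpow q k) = \<bar>q\<bar> powr k"
  by (simp add: qpow_def norm_mult)

lemma cmod_qpow_square: "0 < \<bar>q\<bar> \<Longrightarrow> (cmod (qpow q k))\<^sup>2 = \<bar>q\<bar> powr (2 * k)"
  by (simp add: qpow_def norm_mult powr_power mult.commute)

lemma cmod_divide_qpow_square:
  "0 < \<bar>q\<bar> \<Longrightarrow> (cmod (z / qpow q k))\<^sup>2 = \<bar>q\<bar> powr (- 2 * k) * (cmod z)\<^sup>2"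
  by (simp add: qpow_def norm_mult norm_divide power_divide powr_power powr_minus_divide mult.commute)

(* The weight of y_s e_k for k = j - m/2, with the exponents of Defs multiplied out. *)
definition ys_entry :: "real \<Rightarrow> nat \<Rightarrow> nat \<Rightarrow> real" where
  "ys_entry q m j = sqrt (\<bar>q\<bar> powr (- real m) - \<bar>q\<bar> powr (real m - 2 * real j)
                         - \<bar>q\<bar> powr (2 * real j + 2 - real m) + \<bar>q\<bar> powr (real m + 2))"

lemma index_ys:
  "i < m+1 \<Longrightarrow> j < m+1 \<Longrightarrow>
   ys q m $$ (i,j) = (if i = j+1 then complex_of_real (ys_entry q m j) else 0)"
  by (simp add: ys_def ys_entry_def Let_def algebra_simps)

lemma ys_entry_square:
  assumes "0 < \<bar>q\<bar>" "\<bar>q\<bar> < 1" "j < m"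
  defines "R \<equiv> \<bar>q\<bar> powr (- real m)"
    and "A \<equiv> \<bar>q\<bar> powr (real m - 2 * real j)"
    and "B \<equiv> \<bar>q\<bar> powr (2 * real j + 2 - real m)"
  shows "(ys_entry q m j)\<^sup>2 = (R - A) * (R - B) / R" "0 \<le> ys_entry q m j" "A \<le> R" "B \<le> R"
proof -
  show AR: "A \<le> R" and BR: "B \<le> R"
    unfolding A_def B_def R_def using assms(1-3) by (auto intro!: powr_mono')
  have "\<bar>q\<bar> powr (real m + 2)
      = \<bar>q\<bar> powr (((real m - 2 * real j) + (2 * real j + 2 - real m)) - (- real m))"
    by (simp add: add.commute)
  also have "\<dots> = A * B / R"
    unfolding A_def B_def R_def by (simp only: powr_diff powr_add)
  finally have "A * B / R = \<bar>q\<bar> powr (real m + 2)" ..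
  then have "(R - A) * (R - B) / R = R - A - B + \<bar>q\<bar> powr (real m + 2)"
    using assms(1) by (simp add: R_def field_simps)
  moreover have "0 \<le> (R - A) * (R - B) / R"
    using AR BR by (simp add: R_def)
  ultimately show "(ys_entry q m j)\<^sup>2 = (R - A) * (R - B) / R" "0 \<le> ys_entry q m j"
    by (simp_all add: ys_entry_def R_def A_def B_def)
qed

lemma sum_xs_mult:
  fixes u :: "nat \<Rightarrow> complex"
  shows "a < Suc m \<Longrightarrow> (\<Sum>c<Suc m. xs q m $$ (a,c) * u c) = qpow q (real a - real m/2) * u a"
  by (simp add: xs_def if_distrib[of "\<lambda>z. z * _"] cong: if_cong del: sum.lessThan_Suc)

lemma sum_xs_inv_mult:
  fixes u :: "nat \<Rightarrow> complex"
  shows "a < Suc m \<Longrightarrow> (\<Sum>c<Suc m. xs_inv q m $$ (a,c) * u c) = u a / qpow q (real a - real m/2)"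
  by (simp add: xs_inv_def if_distrib[of "\<lambda>z. z * _"] cong: if_cong del: sum.lessThan_Suc)

lemma sum_ys_mult:
  fixes u :: "nat \<Rightarrow> complex"
  shows "a < Suc m \<Longrightarrow>
   (\<Sum>c<Suc m. ys q m $$ (a,c) * u c) = (if a = 0 then 0 else ys_entry q m (a-1) * u (a-1))"
  by (cases a) (simp_all add: index_ys if_distrib[of "\<lambda>z. z * _"] cong: if_cong del: sum.lessThan_Suc)

definition sqsum :: "nat \<Rightarrow> nat \<Rightarrow> (nat \<Rightarrow> nat \<Rightarrow> complex) \<Rightarrow> real" where
  "sqsum N k w = (\<Sum>I<N. \<Sum>a<k. (cmod (w I a))\<^sup>2)"

lemma As_pair_block_le:
  fixes p r :: complex
  assumes "0 < \<bar>q\<bar>" "\<bar>q\<bar> < 1" "j < m"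
  shows "(cmod (qpow q (real (Suc j) - real m/2) * p + ys_entry q m j * r))\<^sup>2
           + (cmod (r / qpow q (real j - real m/2)))\<^sup>2
         \<le> \<bar>q\<bar> powr (- real m) * ((cmod p)\<^sup>2 + (cmod r)\<^sup>2)"
proof -
  define X where "X = qpow q (real (Suc j) - real m/2)"
  have R: "0 < \<bar>q\<bar> powr (- real m)"
    using assms(1) by simp
  have X: "(cmod X)\<^sup>2 = \<bar>q\<bar> powr (2 * real j + 2 - real m)"
    using assms(1) by (simp add: X_def cmod_qpow_square algebra_simps)
  have "(cmod (r / qpow q (real j - real m/2)))\<^sup>2 = \<bar>q\<bar> powr (real m - 2 * real j) * (cmod r)\<^sup>2"
    using assms(1) by (simp add: cmod_divide_qpow_square algebra_simps)
  moreover have "(cmod (X * p + ys_entry q m j * r))\<^sup>2 + \<bar>q\<bar> powr (real m - 2 * real j) * (cmod r)\<^sup>2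
        \<le> \<bar>q\<bar> powr (- real m) * ((cmod p)\<^sup>2 + (cmod r)\<^sup>2)"
    using ys_entry_square[OF assms] by (intro triangular_2x2_bound[OF R]) (simp_all add: X)
  ultimately show ?thesis
    unfolding X_def by simp
qed

lemma sqsum_As_le:
  assumes "0 < \<bar>q\<bar>" "\<bar>q\<bar> < 1"
  shows "sqsum 2 (m+1) (\<lambda>i a. \<Sum>j<2. \<Sum>c<m+1. As q m i j $$ (a,c) * u j c)
           \<le> \<bar>q\<bar> powr (- real m) * sqsum 2 (m+1) u"
proof -
  define R where "R = \<bar>q\<bar> powr (- real m)"
  define F where "F a = (cmod (qpow q (real a - real m/2) * u 0 a
                              + (if a = 0 then 0 else ys_entry q m (a-1) * u 1 (a-1))))\<^sup>2" for a
  define G where "G a = (cmod (u 1 a / qpow q (real a - real m/2)))\<^sup>2" for a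
  have "sqsum 2 (m+1) (\<lambda>i a. \<Sum>j<2. \<Sum>c<m+1. As q m i j $$ (a,c) * u j c)
      = (\<Sum>a<m+1. F a) + (\<Sum>a<m+1. G a)"
    unfolding sqsum_def sum_lessThan_2
    by (intro arg_cong2[where f = "(+)"] sum.cong refl)
      (simp_all add: sum_lessThan_2 As_def sum_xs_mult sum_ys_mult sum_xs_inv_mult F_def G_def
        del: sum.lessThan_Suc)
  also have "\<dots> = F 0 + (\<Sum>j<m. F (Suc j) + G j) + G m"
    using sum.lessThan_Suc_shift[of F m] sum.lessThan_Suc[of G m] by (simp add: sum.distrib)
  also have "\<dots> \<le> R * (cmod (u 0 0))\<^sup>2 + (\<Sum>j<m. R * ((cmod (u 0 (Suc j)))\<^sup>2 + (cmod (u 1 j))\<^sup>2))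
       + R * (cmod (u 1 m))\<^sup>2"
  proof -
    have "F 0 = R * (cmod (u 0 0))\<^sup>2" "G m = R * (cmod (u 1 m))\<^sup>2"
      using assms(1) by (simp_all add: F_def G_def R_def norm_mult power_mult_distrib
          cmod_qpow_square cmod_divide_qpow_square)
    moreover have "F (Suc j) + G j \<le> R * ((cmod (u 0 (Suc j)))\<^sup>2 + (cmod (u 1 j))\<^sup>2)" if "j < m" for j
      unfolding F_def G_def R_def using As_pair_block_le[OF assms that] by simp
    ultimately show ?thesis
      by (intro add_mono sum_mono) simp_all
  qed
  also have "\<dots> = R * sqsum 2 (m+1) u"
    using sum.lessThan_Suc_shift[of "\<lambda>c. (cmod (u 0 c))\<^sup>2" m] sum.lessThan_Suc[of "\<lambda>c. (cmod (u 1 c))\<^sup>2" m]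
    by (simp add: sqsum_def sum_lessThan_2 sum.distrib sum_distrib_left algebra_simps del: sum.lessThan_Suc)
  finally show ?thesis
    unfolding R_def .
qed

section \<open>Tensor powers of A_s\<close>

lemma As_carrier: "As q m i j \<in> carrier_mat (m+1) (m+1)"
  by (simp add: As_def xs_def xs_inv_def ys_def)

lemma tblk_carrier: "tblk q m n I J \<in> carrier_mat (m+1) (m+1)"
proof (induction n arbitrary: I J)
  case (Suc n)
  show ?case
    using mult_carrier_mat[OF As_carrier Suc.IH] by (simp only: tblk.simps)
qed simp

(* Vectors of C^(2^n) (x) C^(m+1) are handled as functions of the block index and the index
   inside the block. *)
definition tblk_apply :: "real \<Rightarrow> nat \<Rightarrow> nat \<Rightarrow> (nat \<Rightarrow> nat \<Rightarrow> complex) \<Rightarrow> nat \<Rightarrow> nat \<Rightarrow> complex" where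
  "tblk_apply q m n w I a = (\<Sum>J<2^n. \<Sum>b<m+1. tblk q m n I J $$ (a,b) * w J b)"

lemma tblk_apply_Suc:
  assumes "a < m+1" "i < 2"
  shows "tblk_apply q m (Suc n) w (I*2+i) a
       = (\<Sum>j<2. \<Sum>c<m+1. As q m i j $$ (a,c) * tblk_apply q m n (\<lambda>J b. w (J*2+j) b) I c)"
proof -
  have entry: "tblk q m (Suc n) (I*2+i) (J*2+j) $$ (a,b)
      = (\<Sum>c<m+1. As q m i j $$ (a,c) * tblk q m n I J $$ (c,b))" if "j < 2" "b < m+1" for J j b
  proof -
    have "tblk q m (Suc n) (I*2+i) (J*2+j) = As q m i j * tblk q m n I J"
      using assms(2) that(1) by simp
    then show ?thesis
      using index_mult_mat_sum[OF As_carrier tblk_carrier assms(1) that(2)] by simp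
  qed
  have "tblk_apply q m (Suc n) w (I*2+i) a
      = (\<Sum>J<2^n. \<Sum>j<2. \<Sum>b<m+1. \<Sum>c<m+1. As q m i j $$ (a,c) * tblk q m n I J $$ (c,b) * w (J*2+j) b)"
    unfolding tblk_apply_def power_Suc2 sum_lessThan_mult
    by (intro sum.cong refl) (simp add: entry sum_distrib_right del: sum.lessThan_Suc tblk.simps)
  also have "\<dots> = (\<Sum>j<2. \<Sum>J<2^n. \<Sum>c<m+1. \<Sum>b<m+1. As q m i j $$ (a,c) * tblk q m n I J $$ (c,b) * w (J*2+j) b)"
    by (subst sum.swap) (intro sum.cong refl sum.swap)
  also have "\<dots> = (\<Sum>j<2. \<Sum>c<m+1. \<Sum>J<2^n. \<Sum>b<m+1. As q m i j $$ (a,c) * tblk q m n I J $$ (c,b) * w (J*2+j) b)"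
    by (intro sum.cong refl sum.swap)
  also have "\<dots> = (\<Sum>j<2. \<Sum>c<m+1. As q m i j $$ (a,c) * tblk_apply q m n (\<lambda>J b. w (J*2+j) b) I c)"
    by (simp add: tblk_apply_def sum_distrib_left mult.assoc del: sum.lessThan_Suc)
  finally show ?thesis .
qed

lemma sqsum_mult:
  "sqsum (N*L) k w = (\<Sum>j<L. sqsum N k (\<lambda>J b. w (J*L+j) b))"
  unfolding sqsum_def sum_lessThan_mult by (rule sum.swap)

lemma sqsum_tblk_apply_le:
  assumes "0 < \<bar>q\<bar>" "\<bar>q\<bar> < 1"
  shows "sqsum (2^n) (m+1) (tblk_apply q m n w) \<le> (\<bar>q\<bar> powr (- real m))^n * sqsum (2^n) (m+1) w"
proof (induction n arbitrary: w)
  case 0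
  have "tblk_apply q m 0 w 0 a = w 0 a" if "a < m+1" for a
    using that by (simp add: tblk_apply_def if_distrib[of "\<lambda>z. z * _"] cong: if_cong del: sum.lessThan_Suc)
      (simp add: lessThan_Suc)
  then show ?case
    by (simp add: sqsum_def del: sum.lessThan_Suc)
next
  case (Suc n)
  define R where "R = \<bar>q\<bar> powr (- real m)"
  define U where "U I j c = tblk_apply q m n (\<lambda>J b. w (J*2+j) b) I c" for I j c
  have "sqsum (2^Suc n) (m+1) (tblk_apply q m (Suc n) w)
      = (\<Sum>I<2^n. sqsum 2 (m+1) (\<lambda>i a. \<Sum>j<2. \<Sum>c<m+1. As q m i j $$ (a,c) * U I j c))"
    unfolding sqsum_def power_Suc2 sum_lessThan_mult
    by (intro sum.cong refl) (simp add: tblk_apply_Suc U_def del: sum.lessThan_Suc)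
  also have "\<dots> \<le> (\<Sum>I<2^n. R * sqsum 2 (m+1) (U I))"
    unfolding R_def by (intro sum_mono sqsum_As_le assms)
  also have "\<dots> = R * (\<Sum>j<2. sqsum (2^n) (m+1) (tblk_apply q m n (\<lambda>J b. w (J*2+j) b)))"
    unfolding sum_distrib_left[symmetric] sqsum_def U_def
    by (subst sum.swap) (simp add: sum.swap[of _ "{..<2^n}"] del: sum.lessThan_Suc)
  also have "\<dots> \<le> R * (\<Sum>j<2. R^n * sqsum (2^n) (m+1) (\<lambda>J b. w (J*2+j) b))"
    by (intro mult_left_mono sum_mono Suc.IH[unfolded R_def[symmetric]]) (simp_all add: R_def)
  also have "\<dots> = R^(Suc n) * sqsum (2^Suc n) (m+1) w"
    unfolding power_Suc2[of 2 n] sqsum_mult by (simp add: sum_distrib_left mult.assoc del: sum.lessThan_Suc)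
  finally show ?case
    by (simp add: R_def)
qed

lemma tblk_0_0: "tblk q m n 0 0 $$ (0,0) = (qpow q (- (real m/2)))^n"
proof (induction n)
  case (Suc n)
  have "tblk q m (Suc n) 0 0 $$ (0,0) = (As q m 0 0 * tblk q m n 0 0) $$ (0,0)"
    by simp
  also have "\<dots> = (\<Sum>c<m+1. xs q m $$ (0,c) * tblk q m n 0 0 $$ (c,0))"
    by (subst index_mult_mat_sum[OF As_carrier tblk_carrier]) (simp_all add: As_def)
  also have "\<dots> = qpow q (- (real m/2)) * tblk q m n 0 0 $$ (0,0)"
    using sum_xs_mult[of 0 m q "\<lambda>c. tblk q m n 0 0 $$ (c,0)"] by simp
  finally show ?case
    using Suc by simp
qed simp

lemma Vten_carrier: "Vten q m n \<in> carrier_mat (2^n*(m+1)) (2^n*(m+1))"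
  by (simp add: Vten_def)

lemma vnorm_square_blocks:
  "y \<in> carrier_vec (N*k) \<Longrightarrow> (vnorm y)\<^sup>2 = sqsum N k (\<lambda>I a. y $ (I*k + a))"
  by (simp add: vnorm_square sqsum_def sum_lessThan_mult)

lemma index_Vten_mult_vec:
  assumes "I < 2^n" "a < m+1" "y \<in> carrier_vec (2^n*(m+1))"
  shows "(Vten q m n *\<^sub>v y) $ (I*(m+1)+a) = tblk_apply q m n (\<lambda>J b. y $ (J*(m+1)+b)) I a"
proof -
  have row: "I*(m+1)+a < 2^n*(m+1)"
    using assms(1,2) by (rule index_lt_mult)
  have "Vten q m n $$ (I*(m+1)+a, J*(m+1)+b) = tblk q m n I J $$ (a,b)"
    if "J < 2^n" "b < m+1" for J b
    using row index_lt_mult[OF that] unfolding Vten_def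
    by (simp only: index_mat case_prod_conv mult_add_div_mod assms(2) that(2))
  then show ?thesis
    unfolding index_mult_mat_vec_sum[OF Vten_carrier assms(3) row] sum_lessThan_mult tblk_apply_def
    by (intro sum.cong refl) (simp only: lessThan_iff)
qed

lemma vnorm_Vten_le:
  assumes "0 < \<bar>q\<bar>" "\<bar>q\<bar> < 1" "y \<in> carrier_vec (2^n*(m+1))"
  shows "vnorm (Vten q m n *\<^sub>v y) \<le> \<bar>q\<bar> powr (- (real m * real n / 2)) * vnorm y"
proof -
  have "(vnorm (Vten q m n *\<^sub>v y))\<^sup>2 = sqsum (2^n) (m+1) (\<lambda>I a. (Vten q m n *\<^sub>v y) $ (I*(m+1)+a))"
    using mult_mat_vec_carrier[OF Vten_carrier assms(3)] by (rule vnorm_square_blocks)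
  also have "\<dots> = sqsum (2^n) (m+1) (tblk_apply q m n (\<lambda>J b. y $ (J*(m+1)+b)))"
    unfolding sqsum_def by (intro sum.cong refl) (simp only: lessThan_iff index_Vten_mult_vec[OF _ _ assms(3)])
  also have "\<dots> \<le> (\<bar>q\<bar> powr (- real m))^n * (vnorm y)\<^sup>2"
    unfolding vnorm_square_blocks[OF assms(3)] using assms(1,2) by (rule sqsum_tblk_apply_le)
  also have "(\<bar>q\<bar> powr (- real m))^n = (\<bar>q\<bar> powr (- (real m * real n / 2)))\<^sup>2"
    using assms(1) by (simp add: powr_power mult.commute)
  also have "\<dots> * (vnorm y)\<^sup>2 = (\<bar>q\<bar> powr (- (real m * real n / 2)) * vnorm y)\<^sup>2"
    by (simp add: power_mult_distrib)
  finally show ?thesis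
    by (rule power2_le_imp_le) (simp add: vnorm_nonneg)
qed

section \<open>Compression to the spin subspace\<close>

lemma kron_id_spin_iso:
  assumes "spin_iso q n P"
  shows "kron_id P (m+1) \<in> carrier_mat (2^n*(m+1)) ((n+1)*(m+1))"
    "cadj (kron_id P (m+1)) * kron_id P (m+1) = 1\<^sub>m ((n+1)*(m+1))"
proof -
  have P: "P \<in> carrier_mat (2^n) (n+1)" and iso: "cadj P * P = 1\<^sub>m (n+1)"
    using assms by (simp_all add: spin_iso_def)
  show "kron_id P (m+1) \<in> carrier_mat (2^n*(m+1)) ((n+1)*(m+1))"
    using P by (rule kron_id_carrier)
  show "cadj (kron_id P (m+1)) * kron_id P (m+1) = 1\<^sub>m ((n+1)*(m+1))"
    using P iso by (rule kron_id_isometry) simp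
qed

lemma vst_carrier:
  assumes "spin_iso q n P"
  shows "vst q m n P \<in> carrier_mat ((n+1)*(m+1)) ((n+1)*(m+1))"
  using kron_id_spin_iso(1)[OF assms] unfolding vst_def
  by (intro mult_carrier_mat[OF mult_carrier_mat[OF cadj_carrier Vten_carrier]])

lemma vnorm_vst_le:
  assumes "0 < \<bar>q\<bar>" "\<bar>q\<bar> < 1" "spin_iso q n P" "x \<in> carrier_vec ((n+1)*(m+1))"
  shows "vnorm (vst q m n P *\<^sub>v x) \<le> \<bar>q\<bar> powr (- (real m * real n / 2)) * vnorm x"
  unfolding vst_def
  using kron_id_spin_iso[OF assms(3)] Vten_carrier vnorm_Vten_le[OF assms(1,2)] assms(4)
  by (rule vnorm_compression_le)

lemma unit_vec_0_in_Hsp: "unit_vec (2^n) 0 \<in> Hsp q n"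
  unfolding Hsp_def
proof (intro CollectI conjI allI impI)
  fix i K :: nat
  assume K: "i + 1 < n \<and> K < 2^n \<and> (K div 2^i) mod 2 = 0 \<and> (K div 2^(i+1)) mod 2 = 1"
  then have "2^(i+1) \<le> K"
    by (metis div_less not_le mod_0 zero_neq_one)
  moreover have "(2::nat)^i < 2^(i+1)"
    by simp
  ultimately have "K \<noteq> 0" "K - 2^i \<noteq> 0" "K - 2^i < 2^n"
    using K by linarith+
  then show "unit_vec (2^n) 0 $ K - complex_of_real q * unit_vec (2^n) 0 $ (K - 2^i) = 0"
    using K by simp
qed simp

lemma cscalar_vst_kron_vec:
  fixes m :: nat
  assumes iso: "spin_iso q n P" and w: "w \<in> carrier_vec (n+1)" "P *\<^sub>v w = unit_vec (2^n) 0"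
  defines "x \<equiv> kron_vec w (unit_vec (m+1) 0)"
  shows "(vst q m n P *\<^sub>v x) \<bullet>c x = (qpow q (- (real m/2)))^n"
proof -
  define K where "K = kron_id P (m+1)"
  define E :: "complex vec" where "E = unit_vec (2^n*(m+1)) 0"
  note K = kron_id_spin_iso[OF iso, of m, folded K_def]
  have x: "x \<in> carrier_vec ((n+1)*(m+1))"
    unfolding x_def using carrier_vecD[OF w(1)] by (intro carrier_vecI) (simp only: dim_kron_vec index_unit_vec(3))
  have P: "P \<in> carrier_mat (2^n) (n+1)"
    using iso by (simp add: spin_iso_def)
  have KxE: "K *\<^sub>v x = E"
    unfolding K_def x_def E_def
    by (simp add: kron_id_mult_kron_vec[OF P w(1)] w(2) kron_vec_unit_vec_0)
  have E: "E \<in> carrier_vec (2^n*(m+1))"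
    by (simp add: E_def)
  have VE: "Vten q m n *\<^sub>v E \<in> carrier_vec (2^n*(m+1))"
    using Vten_carrier E by (rule mult_mat_vec_carrier)
  have "vst q m n P *\<^sub>v x = cadj K *\<^sub>v (Vten q m n *\<^sub>v E)"
    unfolding vst_def K_def[symmetric] KxE[symmetric] using K(1) Vten_carrier x
    by (rule compression_mult_vec)
  also have "\<dots> \<bullet>c x = (Vten q m n *\<^sub>v E) \<bullet>c E"
    using cscalar_prod_mult_mat_vec[OF cadj_carrier[OF K(1)] VE x] by (simp add: cadj_cadj KxE)
  also have "\<dots> = (Vten q m n *\<^sub>v E) $ 0"
    unfolding E_def by (rule cscalar_prod_unit_vec[OF VE[unfolded E_def]]) simp
  also have "\<dots> = Vten q m n $$ (0,0)"
    unfolding E_def by (rule mult_mat_vec_unit_vec[OF Vten_carrier]) simp_all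
  also have "\<dots> = (qpow q (- (real m/2)))^n"
    by (simp add: Vten_def tblk_0_0)
  finally show ?thesis .
qed

lemma vst_lower_witness:
  fixes m :: nat
  assumes "0 < \<bar>q\<bar>" "spin_iso q n P"
  obtains x where "x \<in> carrier_vec ((n+1)*(m+1))" "vnorm x = 1"
    "\<bar>q\<bar> powr (- (real m * real n / 2)) \<le> vnorm (vst q m n P *\<^sub>v x)"
proof -
  have P: "P \<in> carrier_mat (2^n) (n+1)" "cadj P * P = 1\<^sub>m (n+1)"
    and range: "{P *\<^sub>v x | x. x \<in> carrier_vec (n+1)} = Hsp q n"
    using assms(2) by (simp_all add: spin_iso_def)
  obtain w where w: "w \<in> carrier_vec (n+1)" "P *\<^sub>v w = unit_vec (2^n) 0"
  proof -
    have "unit_vec (2^n) 0 \<in> {P *\<^sub>v x | x. x \<in> carrier_vec (n+1)}"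
      unfolding range by (rule unit_vec_0_in_Hsp)
    then show ?thesis
      using that by (auto simp only: mem_Collect_eq)
  qed
  define x where "x = kron_vec w (unit_vec (m+1) 0)"
  have x: "x \<in> carrier_vec ((n+1)*(m+1))"
    unfolding x_def using carrier_vecD[OF w(1)] by (intro carrier_vecI) (simp only: dim_kron_vec index_unit_vec(3))
  have "vnorm w = 1"
    using vnorm_isometry[OF P w(1)] w(2) by (simp add: vnorm_unit_vec)
  then have nx: "vnorm x = 1"
    by (simp add: x_def vnorm_kron_vec vnorm_unit_vec)
  have "\<bar>q\<bar> powr (- (real m * real n / 2)) = (\<bar>q\<bar> powr (- (real m / 2)))^n"
    using assms(1) by (simp add: powr_power mult.commute[of "real n"])
  also have "\<dots> = cmod ((vst q m n P *\<^sub>v x) \<bullet>c x)"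
    unfolding x_def cscalar_vst_kron_vec[OF assms(2) w] by (simp add: norm_power cmod_qpow)
  also have "\<dots> \<le> vnorm (vst q m n P *\<^sub>v x) * vnorm x"
    using carrier_vecD[OF mult_mat_vec_carrier[OF vst_carrier[OF assms(2)] x]] carrier_vecD[OF x]
    by (intro norm_cscalar_prod_le) (simp only:)
  finally show ?thesis
    using that x nx by simp
qed

lemma opnorm_vst:
  assumes "0 < \<bar>q\<bar>" "\<bar>q\<bar> < 1" "spin_iso q n P"
  shows "opnorm (vst q m n P) = \<bar>q\<bar> powr (- (real m * real n / 2))"
proof (rule antisym)
  have bound: "vnorm (vst q m n P *\<^sub>v x) \<le> \<bar>q\<bar> powr (- (real m * real n / 2)) * vnorm x"
    if "x \<in> carrier_vec (dim_col (vst q m n P))" for x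
    using that vnorm_vst_le[OF assms] by (simp add: carrier_matD(2)[OF vst_carrier[OF assms(3)]])
  then show "opnorm (vst q m n P) \<le> \<bar>q\<bar> powr (- (real m * real n / 2))"
    by (intro opnorm_le) simp_all
  obtain x where x: "x \<in> carrier_vec ((n+1)*(m+1))" "vnorm x = 1"
    "\<bar>q\<bar> powr (- (real m * real n / 2)) \<le> vnorm (vst q m n P *\<^sub>v x)"
    using vst_lower_witness[OF assms(1,3)] .
  have "vnorm (vst q m n P *\<^sub>v x) \<le> opnorm (vst q m n P)"
    using x(1,2) by (intro vnorm_le_opnorm[OF bound]) (simp_all add: carrier_matD(2)[OF vst_carrier[OF assms(3)]])
  with x(3) show "\<bar>q\<bar> powr (- (real m * real n / 2)) \<le> opnorm (vst q m n P)"
    by linarith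
qed

theorem theorem5p5:
  fixes q :: real
  assumes "-1 < q" and "q < 1" and "q \<noteq> 0"
  shows "\<exists>C > 0. \<forall>(m::nat) (n::nat) P. spin_iso q n P \<longrightarrow>
           \<bar>q\<bar> powr (- (2 * (real m / 2) * (real n / 2))) \<le> opnorm (vst q m n P) \<and>
           opnorm (vst q m n P) \<le> C powr (real m / 2) * \<bar>q\<bar> powr (- (2 * (real m / 2) * (real n / 2)))"
proof (intro exI[of _ 1] conjI allI impI)
  fix m n :: nat and P
  assume "spin_iso q n P"
  moreover have "0 < \<bar>q\<bar>" "\<bar>q\<bar> < 1"
    using assms by auto
  moreover have "2 * (real m / 2) * (real n / 2) = real m * real n / 2"
    by simp
  ultimately show "\<bar>q\<bar> powr (- (2 * (real m / 2) * (real n / 2))) \<le> opnorm (vst q m n P)"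
    and "opnorm (vst q m n P) \<le> 1 powr (real m / 2) * \<bar>q\<bar> powr (- (2 * (real m / 2) * (real n / 2)))"
    by (simp_all add: opnorm_vst)
qed simp

end
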